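(* For every finite abelian group $F$, the real linear span of the image of the correlation map satisfies \[\mathrm{span}_{\mathbb R}\big(A_F(G_F)\big)=\mathbb R^F_{\rm ev}:=\{h\in\mathbb R^F\mid h_{-f}=h_f\ \text{for all } f\in F\}.\]
   Context: Let $F$ be a finite abelian group, written additively, and $G_F=\{-1,1\}^F$. The correlation map $A_F:G_F\to\mathbb Z^F\subseteq\mathbb R^F$ is $A_F(\sigma)_f=\sum_{\ell\in F}\sigma_\ell\sigma_{\ell+f}$. *)

theory Defs
  imports "HOL-Analysis.Analysis"
begin

definition sign_vectors :: "('a::{finite,ab_group_add} \<Rightarrow> int) set" where
  "sign_vectors = {\<sigma>. \<forall>l. \<sigma> l \<in> {-1, 1}}"

definition correlation :: "('a::{finite,ab_group_add} \<Rightarrow> int) \<Rightarrow> real ^ ('a::{finite,ab_group_add})" where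
  "correlation \<sigma> = (\<chi> f. of_int (\<Sum>l\<in>UNIV. \<sigma> l * \<sigma> (l + f)))"

definition even_vectors :: "(real ^ ('a::{finite,ab_group_add})) set" where
  "even_vectors = {h. \<forall>f. h $ (- f) = h $ f}"

end

theory Submission
  imports Defs
begin

text \<open>Correlations are even because reindexing by \<open>l \<mapsto> l - f\<close> swaps \<open>f\<close> and \<open>-f\<close>.
  Conversely, writing a sign vector as \<open>1 - 2x\<close> with \<open>x\<close> a 0/1 vector gives
  \<open>A(1 - 2x) = (|F| - 4 \<Sum>x) \<one> + 4 A(x)\<close>, where \<open>A\<close> is extended to all integer vectors.
  Taking for \<open>x\<close> the indicators of \<open>\<emptyset>\<close>, \<open>{0}\<close> and \<open>{0, f}\<close> shows that \<open>\<one>\<close>, \<open>\<delta>\<^sub>0\<close>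
  and \<open>\<delta>\<^sub>f + \<delta>\<^sub>-\<^sub>f\<close> lie in the span, and the latter vectors span the even vectors.\<close>

definition sym_indicator :: "'a \<Rightarrow> real ^ ('a::{finite,ab_group_add})" where
  "sym_indicator f = (\<chi> g. of_bool (g = f) + of_bool (g = - f))"

lemma sum_shift_UNIV:
  fixes x :: "'a::{finite,ab_group_add} \<Rightarrow> 'b::comm_monoid_add"
  shows "(\<Sum>l\<in>UNIV. x (l + g)) = (\<Sum>l\<in>UNIV. x l)"
  by (rule sum.reindex_bij_witness[of _ "\<lambda>l. l - g" "\<lambda>l. l + g"]) auto

lemma correlation_in_even_vectors: "correlation \<sigma> \<in> even_vectors"
proof -
  have "(\<Sum>l\<in>UNIV. \<sigma> l * \<sigma> (l - f)) = (\<Sum>l\<in>UNIV. \<sigma> l * \<sigma> (l + f))" for f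
    by (rule sum.reindex_bij_witness[of _ "\<lambda>l. l + f" "\<lambda>l. l - f"]) (auto simp: algebra_simps)
  then show ?thesis
    by (simp add: even_vectors_def correlation_def del: of_int_sum of_int_mult)
qed

lemma subspace_even_vectors: "subspace even_vectors"
  unfolding subspace_def even_vectors_def by simp

lemma even_vector_eq_sum_sym_indicator:
  assumes "h \<in> even_vectors"
  shows "h = (\<Sum>f\<in>UNIV. (h $ f / 2) *\<^sub>R sym_indicator f)"
proof (subst vec_eq_iff, intro allI)
  fix g
  have "(\<Sum>f\<in>UNIV. (h $ f / 2) *\<^sub>R sym_indicator f) $ g
      = (\<Sum>f\<in>UNIV. if f = g then h $ f / 2 else 0) + (\<Sum>f\<in>UNIV. if f = - g then h $ f / 2 else 0)"
    unfolding sum_component sum.distrib[symmetric]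
    by (rule sum.cong) (auto simp: sym_indicator_def)
  also have "\<dots> = h $ g"
    using assms by (simp add: even_vectors_def)
  finally show "h $ g = (\<Sum>f\<in>UNIV. (h $ f / 2) *\<^sub>R sym_indicator f) $ g" ..
qed

lemma correlation_one_minus_two:
  fixes x :: "'a::{finite,ab_group_add} \<Rightarrow> int"
  shows "correlation (\<lambda>l. 1 - 2 * x l)
       = (real CARD('a) - 4 * of_int (\<Sum>l\<in>UNIV. x l)) *\<^sub>R 1 + 4 *\<^sub>R correlation x"
proof (subst vec_eq_iff, intro allI)
  fix g
  have "(\<Sum>l\<in>UNIV. (1 - 2 * x l) * (1 - 2 * x (l + g)))
      = (\<Sum>l\<in>UNIV. 1 - 2 * x l - 2 * x (l + g) + 4 * (x l * x (l + g)))"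
    by (rule sum.cong) (auto simp: algebra_simps)
  also have "\<dots> = int CARD('a) - 2 * (\<Sum>l\<in>UNIV. x l) - 2 * (\<Sum>l\<in>UNIV. x (l + g))
                    + 4 * (\<Sum>l\<in>UNIV. x l * x (l + g))"
    by (simp add: sum.distrib sum_subtractf sum_distrib_left)
  also have "\<dots> = int CARD('a) - 4 * (\<Sum>l\<in>UNIV. x l) + 4 * (\<Sum>l\<in>UNIV. x l * x (l + g))"
    by (simp add: sum_shift_UNIV)
  finally show "correlation (\<lambda>l. 1 - 2 * x l) $ g
      = ((real CARD('a) - 4 * of_int (\<Sum>l\<in>UNIV. x l)) *\<^sub>R 1 + 4 *\<^sub>R correlation x) $ g"
    unfolding correlation_def by (simp del: of_int_sum of_int_mult)
qed

lemma sum_of_bool_mult_shift: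
  fixes a b g :: "'a::{finite,ab_group_add}"
  shows "(\<Sum>l\<in>UNIV. of_bool (l = a) * of_bool (l + g = b)) = (of_bool (a + g = b) :: int)"
proof -
  have "(\<Sum>l\<in>UNIV. of_bool (l = a) * of_bool (l + g = b))
      = (\<Sum>l\<in>UNIV. if l = a then of_bool (a + g = b) else (0::int))"
    by (rule sum.cong) auto
  then show ?thesis by simp
qed

lemma correlation_indicator_singleton:
  fixes a :: "'a::{finite,ab_group_add}"
  shows "correlation (\<lambda>l. of_bool (l = a)) = axis 0 1"
  unfolding vec_eq_iff correlation_def axis_def
  using sum_of_bool_mult_shift[of a] by simp

lemma correlation_indicator_pair:
  fixes a b :: "'a::{finite,ab_group_add}"
  shows "correlation (\<lambda>l. of_bool (l = a) + of_bool (l = b))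
       = 2 *\<^sub>R axis 0 1 + sym_indicator (b - a)"
proof (subst vec_eq_iff, intro allI)
  fix g
  have "(\<Sum>l\<in>UNIV. (of_bool (l = a) + of_bool (l = b)) * (of_bool (l + g = a) + of_bool (l + g = b)))
      = (of_bool (a + g = a) + of_bool (a + g = b) + of_bool (b + g = a) + of_bool (b + g = b) :: int)"
    by (simp add: algebra_simps sum.distrib sum_of_bool_mult_shift)
  also have "\<dots> = 2 * of_bool (g = 0) + of_bool (g = b - a) + of_bool (g = - (b - a))"
    by (auto simp: algebra_simps)
  finally show "correlation (\<lambda>l. of_bool (l = a) + of_bool (l = b)) $ g
      = (2 *\<^sub>R axis 0 1 + sym_indicator (b - a)) $ g"
    unfolding correlation_def sym_indicator_def axis_def by (simp del: of_int_sum of_int_mult)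
qed

lemma one_in_span_correlations:
  "(1 :: real ^ ('a::{finite,ab_group_add})) \<in> span (correlation ` (sign_vectors :: ('a \<Rightarrow> int) set))"
proof -
  have "correlation (\<lambda>_::'a. 1) \<in> correlation ` sign_vectors"
    by (simp add: sign_vectors_def)
  then have "(1 / real CARD('a)) *\<^sub>R correlation (\<lambda>_::'a. 1) \<in> span (correlation ` sign_vectors)"
    by (intro span_scale span_base)
  moreover have "correlation (\<lambda>_::'a. 1) = real CARD('a) *\<^sub>R 1"
    by (simp add: correlation_def vec_eq_iff)
  ultimately show ?thesis
    by simp
qed

lemma correlation_01_in_span_correlations:
  fixes x :: "'a::{finite,ab_group_add} \<Rightarrow> int"
  assumes "\<And>l. x l \<in> {0, 1}"
  shows "correlation x \<in> span (correlation ` sign_vectors)"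
proof -
  let ?c = "real CARD('a) - 4 * of_int (\<Sum>l\<in>UNIV. x l)"
  have "(\<lambda>l. 1 - 2 * x l) \<in> sign_vectors"
    using assms by (force simp: sign_vectors_def)
  then have "(1/4) *\<^sub>R correlation (\<lambda>l. 1 - 2 * x l) - (?c / 4) *\<^sub>R 1
      \<in> span (correlation ` sign_vectors)"
    by (intro span_diff span_scale span_base one_in_span_correlations imageI)
  also have "(1/4) *\<^sub>R correlation (\<lambda>l. 1 - 2 * x l) - (?c / 4) *\<^sub>R 1 = correlation x"
    unfolding correlation_one_minus_two by (simp add: vec_eq_iff field_simps)
  finally show ?thesis .
qed

lemma sym_indicator_in_span_correlations:
  fixes f :: "'a::{finite,ab_group_add}"
  shows "sym_indicator f \<in> span (correlation ` sign_vectors)"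
proof -
  have axis_in: "axis (0::'a) 1 \<in> span (correlation ` sign_vectors)"
    using correlation_01_in_span_correlations[of "\<lambda>l. of_bool (l = 0)"]
    by (simp add: correlation_indicator_singleton)
  show ?thesis
  proof (cases "f = 0")
    case True
    then have "sym_indicator f = 2 *\<^sub>R axis 0 1"
      by (simp add: vec_eq_iff sym_indicator_def axis_def)
    then show ?thesis
      using axis_in by (simp add: span_scale)
  next
    case False
    then have "correlation (\<lambda>l. of_bool (l = 0) + of_bool (l = f)) \<in> span (correlation ` sign_vectors)"
      by (intro correlation_01_in_span_correlations) auto
    then have "correlation (\<lambda>l. of_bool (l = 0) + of_bool (l = f)) - 2 *\<^sub>R axis 0 1
        \<in> span (correlation ` sign_vectors)"
      using axis_in by (intro span_diff span_scale)
    then show ?thesis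
      by (simp add: correlation_indicator_pair)
  qed
qed

theorem mainTheorem3:
  shows "span (correlation ` (sign_vectors :: ('a::{finite,ab_group_add} \<Rightarrow> int) set)) = (even_vectors :: (real ^ ('a::{finite,ab_group_add})) set)"
proof
  show "span (correlation ` sign_vectors) \<subseteq> (even_vectors :: (real ^ ('a::{finite,ab_group_add})) set)"
    by (intro span_minimal subspace_even_vectors) (auto intro: correlation_in_even_vectors)
  show "even_vectors \<subseteq> span (correlation ` (sign_vectors :: ('a \<Rightarrow> int) set))"
  proof
    fix h :: "real ^ ('a::{finite,ab_group_add})"
    assume "h \<in> even_vectors"
    then have "h = (\<Sum>f\<in>UNIV. (h $ f / 2) *\<^sub>R sym_indicator f)"
      by (rule even_vector_eq_sum_sym_indicator)
    also have "\<dots> \<in> span (correlation ` sign_vectors)"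
      by (intro span_sum span_scale sym_indicator_in_span_correlations)
    finally show "h \<in> span (correlation ` sign_vectors)" .
  qed
qed

end
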